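(* Let $n, q$ be positive integers, let $\mathcal{A} = \langle V, V_0, V_1, E\rangle$ be an arena (over some set of colors $C$) with $n$ nodes, let $\preceq$ be any total preorder on $V$, and let $S_1$ be a $q$-state strategy of Player 0 in $\mathcal{A}$. Then there exists a chromatic $(qn+1)^n$-state strategy $S_2$ of Player 0 in $\mathcal{A}$ such that for every $v\in V$, \[\mathsf{col}(S_2, v) \subseteq \bigcup_{u\in V,\ v\preceq u} \mathsf{col}(S_1, u).\]
   Context: An arena over a set of colors $C$ is a tuple $\mathcal{A} = \langle V, V_0, V_1, E\rangle$ of finite sets with $V = V_0 \sqcup V_1$, $E \subseteq V \times C \times V$, and every node having at least one outgoing edge; for $e=(s,c,t)$ write $\mathsf{source}(e)=s$, $\mathsf{col}(e)=c$, $\mathsf{target}(e)=t$. A path is a nonempty finite or infinite sequence of edges $e_1e_2\ldots$ with $\mathsf{target}(e_i)=\mathsf{source}(e_{i+1})$; for each node $v$ there is also a $0$-length path $\lambda_v$ with source and target $v$. $\mathsf{col}$ extends letterwise to sequences of edges. A strategy of Player 0 is a function $S$ assigning to each finite path $p$ with $\mathsf{target}(p)\in V_0$ an edge $S(p)$ with $\mathsf{source}(S(p))=\mathsf{target}(p)$. A path $p=e_1e_2\ldots$ is consistent with $S$ if (when $\mathsf{source}(p)\in V_0$) $e_1=S(\lambda_{\mathsf{source}(p)})$ and for each $1\le i<|p|$ with $\mathsf{target}(e_i)\in V_0$ we have $e_{i+1}=S(e_1\ldots e_i)$. For $v\in V$, $\mathsf{col}(S,v)\subseteq C^\omega$ is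 the set of $\mathsf{col}(p)$ over all infinite paths $p$ from $v$ consistent with $S$. A memory structure is $\mathcal{M}=\langle M, m_{init},\delta\rangle$ with $M$ finite, $m_{init}\in M$, $\delta: M\times E\to M$ (extended to finite edge sequences in the usual way). $S$ is an $\mathcal{M}$-strategy if for all finite paths $p_1,p_2$ with $\mathsf{target}(p_1)=\mathsf{target}(p_2)\in V_0$, $\delta(m_{init},p_1)=\delta(m_{init},p_2)$ implies $S(p_1)=S(p_2)$. $\mathcal{M}$ is chromatic if there is $\sigma: M\times C\to M$ with $\delta(m,e)=\sigma(m,\mathsf{col}(e))$ for all $m,e$. A (chromatic) $q$-state strategy is an $\mathcal{M}$-strategy for some (chromatic) memory structure $\mathcal{M}$ with $|M|=q$. *)

theory Defs
  imports Main
begin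

type_synonym ('v,'c) edge = "'v \<times> 'c \<times> 'v"

definition esrc :: "('v,'c) edge \<Rightarrow> 'v" where "esrc e = fst e"
definition ecol :: "('v,'c) edge \<Rightarrow> 'c" where "ecol e = fst (snd e)"
definition etgt :: "('v,'c) edge \<Rightarrow> 'v" where "etgt e = snd (snd e)"

text \<open>Arena over colour type 'c (the colour set C is the type).\<close>
definition arena :: "'v set \<Rightarrow> 'v set \<Rightarrow> 'v set \<Rightarrow> ('v,'c) edge set \<Rightarrow> bool" where
  "arena V V0 V1 E \<longleftrightarrow> finite V \<and> finite E \<and> V = V0 \<union> V1 \<and> V0 \<inter> V1 = {}
     \<and> (\<forall>e\<in>E. esrc e \<in> V \<and> etgt e \<in> V)
     \<and> (\<forall>v\<in>V. \<exists>e\<in>E. esrc e = v)"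

text \<open>A finite path is a pair (source node, list of edges); (v, []) is the 0-length path at v.\<close>
definition fpath :: "'v set \<Rightarrow> ('v,'c) edge set \<Rightarrow> 'v \<times> ('v,'c) edge list \<Rightarrow> bool" where
  "fpath V E p \<longleftrightarrow> fst p \<in> V \<and>
     (snd p = [] \<or> (esrc (hd (snd p)) = fst p \<and> set (snd p) \<subseteq> E \<and>
        (\<forall>i. Suc i < length (snd p) \<longrightarrow> etgt (snd p ! i) = esrc (snd p ! Suc i))))"

definition ptgt :: "'v \<times> ('v,'c) edge list \<Rightarrow> 'v" where
  "ptgt p = (if snd p = [] then fst p else etgt (last (snd p)))"

definition strategy ::
  "'v set \<Rightarrow> 'v set \<Rightarrow> ('v,'c) edge set \<Rightarrow> ('v \<times> ('v,'c) edge list \<Rightarrow> ('v,'c) edge) \<Rightarrow> bool" where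
  "strategy V V0 E S \<longleftrightarrow> (\<forall>p. fpath V E p \<and> ptgt p \<in> V0 \<longrightarrow> S p \<in> E \<and> esrc (S p) = ptgt p)"

definition ipath :: "('v,'c) edge set \<Rightarrow> 'v \<Rightarrow> (nat \<Rightarrow> ('v,'c) edge) \<Rightarrow> bool" where
  "ipath E v w \<longleftrightarrow> esrc (w 0) = v \<and> (\<forall>i. w i \<in> E \<and> etgt (w i) = esrc (w (Suc i)))"

definition consistent ::
  "'v set \<Rightarrow> ('v \<times> ('v,'c) edge list \<Rightarrow> ('v,'c) edge) \<Rightarrow> 'v \<Rightarrow> (nat \<Rightarrow> ('v,'c) edge) \<Rightarrow> bool" where
  "consistent V0 S v w \<longleftrightarrow> (v \<in> V0 \<longrightarrow> w 0 = S (v, [])) \<and>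
     (\<forall>i. etgt (w i) \<in> V0 \<longrightarrow> w (Suc i) = S (v, map w [0..<Suc i]))"

definition cols ::
  "'v set \<Rightarrow> ('v,'c) edge set \<Rightarrow> ('v \<times> ('v,'c) edge list \<Rightarrow> ('v,'c) edge) \<Rightarrow> 'v \<Rightarrow> (nat \<Rightarrow> 'c) set" where
  "cols V0 E S v = {(\<lambda>i. ecol (w i)) | w. ipath E v w \<and> consistent V0 S v w}"

definition memory_structure :: "('v,'c) edge set \<Rightarrow> 'm set \<Rightarrow> 'm \<Rightarrow> ('m \<Rightarrow> ('v,'c) edge \<Rightarrow> 'm) \<Rightarrow> bool" where
  "memory_structure E M m0 \<delta> \<longleftrightarrow> finite M \<and> m0 \<in> M \<and> (\<forall>m\<in>M. \<forall>e\<in>E. \<delta> m e \<in> M)"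

definition delta_ext :: "('m \<Rightarrow> ('v,'c) edge \<Rightarrow> 'm) \<Rightarrow> 'm \<Rightarrow> ('v,'c) edge list \<Rightarrow> 'm" where
  "delta_ext \<delta> m es = fold (\<lambda>e m. \<delta> m e) es m"

definition mem_strategy ::
  "'v set \<Rightarrow> 'v set \<Rightarrow> ('v,'c) edge set \<Rightarrow> 'm \<Rightarrow> ('m \<Rightarrow> ('v,'c) edge \<Rightarrow> 'm)
     \<Rightarrow> ('v \<times> ('v,'c) edge list \<Rightarrow> ('v,'c) edge) \<Rightarrow> bool" where
  "mem_strategy V V0 E m0 \<delta> S \<longleftrightarrow> strategy V V0 E S \<and>
     (\<forall>p1 p2. fpath V E p1 \<and> fpath V E p2 \<and> ptgt p1 = ptgt p2 \<and> ptgt p1 \<in> V0 \<and>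
        delta_ext \<delta> m0 (snd p1) = delta_ext \<delta> m0 (snd p2) \<longrightarrow> S p1 = S p2)"

definition chromatic :: "('v,'c) edge set \<Rightarrow> 'm set \<Rightarrow> ('m \<Rightarrow> ('v,'c) edge \<Rightarrow> 'm) \<Rightarrow> bool" where
  "chromatic E M \<delta> \<longleftrightarrow> (\<exists>\<sigma>. \<forall>m\<in>M. \<forall>e\<in>E. \<delta> m e = \<sigma> m (ecol e))"

text \<open>q-state strategies; memory states are encoded as natural numbers (w.l.o.g.).\<close>
definition q_state_strategy ::
  "'v set \<Rightarrow> 'v set \<Rightarrow> ('v,'c) edge set \<Rightarrow> nat \<Rightarrow> ('v \<times> ('v,'c) edge list \<Rightarrow> ('v,'c) edge) \<Rightarrow> bool" where
  "q_state_strategy V V0 E q S \<longleftrightarrow> (\<exists>(M::nat set) m0 \<delta>. memory_structure E M m0 \<delta> \<and> card M = q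
      \<and> mem_strategy V V0 E m0 \<delta> S)"

definition chromatic_q_state_strategy ::
  "'v set \<Rightarrow> 'v set \<Rightarrow> ('v,'c) edge set \<Rightarrow> nat \<Rightarrow> ('v \<times> ('v,'c) edge list \<Rightarrow> ('v,'c) edge) \<Rightarrow> bool" where
  "chromatic_q_state_strategy V V0 E q S \<longleftrightarrow> (\<exists>(M::nat set) m0 \<delta>. memory_structure E M m0 \<delta> \<and> card M = q
      \<and> chromatic E M \<delta> \<and> mem_strategy V V0 E m0 \<delta> S)"

definition total_preorder_on :: "'v set \<Rightarrow> ('v \<times> 'v) set \<Rightarrow> bool" where
  "total_preorder_on V R \<longleftrightarrow> R \<subseteq> V \<times> V \<and> (\<forall>x\<in>V. (x,x) \<in> R) \<and>
     (\<forall>x y z. (x,y) \<in> R \<and> (y,z) \<in> R \<longrightarrow> (x,z) \<in> R) \<and>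
     (\<forall>x\<in>V. \<forall>y\<in>V. (x,y) \<in> R \<or> (y,x) \<in> R)"

end

theory Submission
  imports Defs "HOL-Library.FuncSet"
begin

text \<open>The new memory stores, for every node \<open>y\<close>, either nothing or a pair \<open>(u, m)\<close>
  witnessing that some finite \<open>S1\<close>-play from \<open>u\<close> has produced exactly the colours read so
  far, ends in \<open>y\<close>, and leaves \<open>S1\<close> in memory state \<open>m\<close>; among all such witnesses an
  \<open>R\<close>-maximal origin \<open>u\<close> is kept. This memory is updated from colours alone and has at most
  \<open>(qn + 1)^n\<close> values. \<open>S2\<close> plays at \<open>y\<close> what \<open>S1\<close> plays in memory \<open>m\<close>. Along an
  \<open>S2\<close>-play from \<open>v\<close> the current node always carries a witness with origin \<open>u\<close>,
  \<open>v \<preceq> u\<close>, since taking maxima can only increase the origin. Hence every finite prefix of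
  the colour sequence is produced by an \<open>S1\<close>-play from such a \<open>u\<close>, and by Koenig's lemma
  these finite plays combine into an infinite one.\<close>

primrec choice_seq :: "('a list \<Rightarrow> 'a) \<Rightarrow> nat \<Rightarrow> 'a list" where
  "choice_seq ch 0 = []"
| "choice_seq ch (Suc k) = choice_seq ch k @ [ch (choice_seq ch k)]"

lemma choice_seq_eq_map: "choice_seq ch k = map (\<lambda>i. ch (choice_seq ch i)) [0..<k]"
  by (induction k) auto

lemma koenig:
  assumes "finite A"
    and long: "\<And>k. \<exists>xs. length xs = k \<and> P xs"
    and prefix_closed: "\<And>xs ys. P (xs @ ys) \<Longrightarrow> P xs"
    and alphabet: "\<And>xs. P xs \<Longrightarrow> set xs \<subseteq> A"
  shows "\<exists>g. \<forall>k. P (map g [0..<k])"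
proof -
  define extensible where "extensible xs \<longleftrightarrow> (\<forall>k. \<exists>ys. length ys = k \<and> P (xs @ ys))" for xs
  have extend: "\<exists>a\<in>A. extensible (xs @ [a])" if "extensible xs" for xs
  proof (rule ccontr)
    assume "\<not> (\<exists>a\<in>A. extensible (xs @ [a]))"
    then have "\<forall>a\<in>A. \<exists>k. \<forall>ys. length ys = k \<longrightarrow> \<not> P (xs @ a # ys)"
      unfolding extensible_def by auto
    then obtain bound where bound: "\<And>a ys. a \<in> A \<Longrightarrow> length ys = bound a \<Longrightarrow> \<not> P (xs @ a # ys)"
      by metis
    obtain zs where "length zs = Suc (Max (bound ` A))" "P (xs @ zs)"
      using \<open>extensible xs\<close> unfolding extensible_def by blast
    then obtain a ys where P: "P (xs @ a # ys)" and len: "length ys = Max (bound ` A)"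
      by (cases zs) auto
    have "a \<in> A" using alphabet[OF P] by simp
    then have "bound a \<le> length ys" using \<open>finite A\<close> len by simp
    then have "P (xs @ a # take (bound a) ys)"
      using prefix_closed[of "xs @ a # take (bound a) ys" "drop (bound a) ys"] P by simp
    then show False using bound[OF \<open>a \<in> A\<close>] \<open>bound a \<le> length ys\<close> by simp
  qed
  define ch where "ch xs = (SOME a. a \<in> A \<and> extensible (xs @ [a]))" for xs
  have "extensible (choice_seq ch k)" for k
  proof (induction k)
    case 0
    show ?case using long unfolding extensible_def by simp
  next
    case (Suc k)
    then have "\<exists>a. a \<in> A \<and> extensible (choice_seq ch k @ [a])" using extend by blast
    then have "extensible (choice_seq ch k @ [ch (choice_seq ch k)])"
      unfolding ch_def by (rule someI_ex[THEN conjunct2])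
    then show ?case by simp
  qed
  then have "P (choice_seq ch k)" for k
    unfolding extensible_def by (metis append_Nil2 length_0_conv)
  then show ?thesis using choice_seq_eq_map by metis
qed

lemma total_preorder_on_finite_has_max:
  assumes "total_preorder_on V R" "finite A" "A \<noteq> {}" "A \<subseteq> V"
  shows "\<exists>x\<in>A. \<forall>y\<in>A. (y, x) \<in> R"
  using assms(2-4)
proof (induction A rule: finite_ne_induct)
  case (singleton x)
  then show ?case using assms(1) unfolding total_preorder_on_def by auto
next
  case (insert x A)
  then obtain z where z: "z \<in> A" "\<forall>y\<in>A. (y, z) \<in> R" by auto
  have "x \<in> V" "z \<in> V" using insert.prems z(1) by auto
  show ?case
  proof (cases "(x, z) \<in> R")
    case True
    then show ?thesis using z by auto
  next
    case False
    with \<open>x \<in> V\<close> \<open>z \<in> V\<close> have "(z, x) \<in> R" using assms(1) unfolding total_preorder_on_def by blast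
    then have "(y, x) \<in> R" if "y \<in> A" for y
      using z(2) that assms(1) unfolding total_preorder_on_def by blast
    then show ?thesis using \<open>x \<in> V\<close> assms(1) unfolding total_preorder_on_def by blast
  qed
qed

lemma ptgt_snoc [simp]: "ptgt (u, es @ [e]) = etgt e"
  by (simp add: ptgt_def)

lemma ptgt_in_V:
  assumes "arena V V0 V1 E" "fpath V E p"
  shows "ptgt p \<in> V"
  using assms unfolding fpath_def arena_def ptgt_def by (metis last_in_set subsetD)

lemma ptgt_ipath_prefix:
  assumes "ipath E v w"
  shows "ptgt (v, map w [0..<k]) = esrc (w k)"
  using assms by (cases k) (auto simp: ptgt_def ipath_def)

lemma fpath_snoc:
  assumes "fpath V E (u, es)" "e \<in> E" "esrc e = ptgt (u, es)"
  shows "fpath V E (u, es @ [e])"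
proof (cases "es = []")
  case True
  then show ?thesis using assms by (auto simp: fpath_def ptgt_def)
next
  case False
  have "etgt ((es @ [e]) ! i) = esrc ((es @ [e]) ! Suc i)" if "Suc i < length (es @ [e])" for i
  proof (cases "Suc i < length es")
    case True
    then show ?thesis using assms False by (auto simp: fpath_def nth_append)
  next
    case False
    then have "i = length es - 1" using that by simp
    then show ?thesis using assms \<open>es \<noteq> []\<close> by (auto simp: ptgt_def nth_append last_conv_nth)
  qed
  then show ?thesis using assms False by (auto simp: fpath_def)
qed

lemma fpath_appendD:
  assumes "fpath V E (u, xs @ ys)"
  shows "fpath V E (u, xs)"
proof (cases "xs = []")
  case True
  then show ?thesis using assms by (simp add: fpath_def)
next
  case False
  have "etgt (xs ! i) = esrc (xs ! Suc i)" if "Suc i < length xs" for i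
  proof -
    have "etgt ((xs @ ys) ! i) = esrc ((xs @ ys) ! Suc i)"
      using assms that False unfolding fpath_def by auto
    then show ?thesis using that by (simp add: nth_append)
  qed
  then show ?thesis using assms False unfolding fpath_def by auto
qed

definition fplay ::
  "'v set \<Rightarrow> 'v set \<Rightarrow> ('v,'c) edge set \<Rightarrow> ('v \<times> ('v,'c) edge list \<Rightarrow> ('v,'c) edge)
     \<Rightarrow> 'v \<Rightarrow> ('v,'c) edge list \<Rightarrow> bool" where
  "fplay V V0 E S u es \<longleftrightarrow> fpath V E (u, es) \<and>
     (\<forall>k<length es. esrc (es ! k) \<in> V0 \<longrightarrow> es ! k = S (u, take k es))"

lemma fplay_appendD:
  assumes "fplay V V0 E S u (xs @ ys)"
  shows "fplay V V0 E S u xs"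
proof -
  have "xs ! k = S (u, take k xs)" if "k < length xs" "esrc (xs ! k) \<in> V0" for k
  proof -
    have "k < length (xs @ ys)" "esrc ((xs @ ys) ! k) \<in> V0" using that by (simp_all add: nth_append)
    then have "(xs @ ys) ! k = S (u, take k (xs @ ys))"
      using assms unfolding fplay_def by blast
    then show ?thesis using that by (simp add: nth_append)
  qed
  moreover have "fpath V E (u, xs)" using assms fplay_def fpath_appendD by metis
  ultimately show ?thesis unfolding fplay_def by blast
qed

lemma fplay_snoc:
  assumes "fplay V V0 E S u es" "e \<in> E" "esrc e = ptgt (u, es)"
    and "ptgt (u, es) \<in> V0 \<Longrightarrow> e = S (u, es)"
  shows "fplay V V0 E S u (es @ [e])"
proof -
  have "fpath V E (u, es)" using assms(1) unfolding fplay_def by blast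
  then have "fpath V E (u, es @ [e])" using assms(2,3) by (rule fpath_snoc)
  moreover have "(es @ [e]) ! k = S (u, take k (es @ [e]))"
    if "k < length (es @ [e])" "esrc ((es @ [e]) ! k) \<in> V0" for k
  proof (cases "k = length es")
    case True
    then have "esrc e \<in> V0" using that(2) by simp
    then have "e = S (u, es)" using assms(3,4) by simp
    then show ?thesis using True by simp
  next
    case False
    then have "k < length es" "esrc (es ! k) \<in> V0" using that by (simp_all add: nth_append)
    then have "es ! k = S (u, take k es)" using assms(1) unfolding fplay_def by blast
    then show ?thesis using \<open>k < length es\<close> by (simp add: nth_append)
  qed
  ultimately show ?thesis unfolding fplay_def by blast
qed

lemma ipath_consistent_if_fplay_prefixes:
  assumes "\<And>k. fplay V V0 E S u (map g [0..<k])"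
  shows "ipath E u g \<and> consistent V0 S u g"
proof -
  have path: "fpath V E (u, map g [0..<k])" for k using assms unfolding fplay_def by blast
  have move: "g i = S (u, map g [0..<i])" if "esrc (g i) \<in> V0" for i
    using assms[of "Suc i"] that unfolding fplay_def by (auto simp: nth_append take_map)
  have src: "esrc (g 0) = u" using path[of 1] unfolding fpath_def by simp
  have step: "etgt (g i) = esrc (g (Suc i))" for i
    using path[of "Suc (Suc i)"] unfolding fpath_def by (auto simp: nth_append)
  have "g i \<in> E" for i using path[of "Suc i"] unfolding fpath_def by auto
  then have "ipath E u g" using src step unfolding ipath_def by blast
  moreover have "consistent V0 S u g"
    unfolding consistent_def using move[of 0] move[of "Suc _"] src step by auto
  ultimately show ?thesis ..
qed

lemma cols_compactness:
  assumes "finite E"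
    and prefixes: "\<And>k. \<exists>u\<in>U. \<exists>es. fplay V V0 E S u es \<and> map ecol es = map c [0..<k]"
  shows "c \<in> (\<Union>u\<in>U. cols V0 E S u)"
proof -
  define P where "P es \<longleftrightarrow> (\<exists>u\<in>U. fplay V V0 E S u es \<and> map ecol es = map c [0..<length es])" for es
  have "\<exists>es. length es = k \<and> P es" for k
    using prefixes[of k] unfolding P_def by (metis length_map length_upt minus_nat.diff_0)
  moreover have "P xs" if longer: "P (xs @ ys)" for xs ys
  proof -
    obtain u where "u \<in> U" and play: "fplay V V0 E S u (xs @ ys)"
      and cols: "map ecol (xs @ ys) = map c [0..<length (xs @ ys)]"
      using longer unfolding P_def by blast
    moreover have "map ecol xs = map c [0..<length xs]"
      using arg_cong[OF cols, of "take (length xs)"] by (simp add: take_map)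
    ultimately show ?thesis unfolding P_def using fplay_appendD[OF play] by blast
  qed
  moreover have "set es \<subseteq> E" if "P es" for es
    using that unfolding P_def fplay_def fpath_def by auto
  ultimately obtain g where g: "\<And>k. P (map g [0..<k])"
    using koenig[OF \<open>finite E\<close>] by metis
  define u where "u = esrc (g 0)"
  have start: "u \<in> U \<and> fplay V V0 E S u (map g [0..<Suc k])" for k
  proof -
    obtain u' where "u' \<in> U" "fplay V V0 E S u' (map g [0..<Suc k])"
      using g unfolding P_def by blast
    moreover then have "u' = u" unfolding u_def fplay_def fpath_def by (simp add: upt_conv_Cons del: upt_Suc)
    ultimately show ?thesis by simp
  qed
  then have "fplay V V0 E S u (map g [0..<k])" for k
    by (metis fplay_appendD map_append upt_Suc_append zero_le)
  then have "ipath E u g \<and> consistent V0 S u g" by (rule ipath_consistent_if_fplay_prefixes)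
  moreover have "c i = ecol (g i)" for i
  proof -
    have "map ecol (map g [0..<Suc i]) = map c [0..<Suc i]" using g[of "Suc i"] unfolding P_def by simp
    then show ?thesis by simp
  qed
  ultimately show ?thesis using start[of 0] unfolding cols_def by auto
qed

lemma consistent_move:
  assumes "ipath E v w" "consistent V0 S v w" "esrc (w k) \<in> V0"
  shows "w k = S (v, map w [0..<k])"
  using assms by (cases k) (auto simp: ipath_def consistent_def)

lemma chromatic_q_state_strategyI:
  fixes M :: "'m set" and \<sigma> :: "'m \<Rightarrow> 'c \<Rightarrow> 'm" and move :: "'m \<Rightarrow> 'v \<Rightarrow> ('v,'c) edge"
  assumes "finite M" "start \<in> M" and closed: "\<And>m c. m \<in> M \<Longrightarrow> \<sigma> m c \<in> M"
    and "strategy V V0 E S"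
    and S: "\<And>p. S p = move (fold (\<lambda>c m. \<sigma> m c) (map ecol (snd p)) start) (ptgt p)"
  shows "chromatic_q_state_strategy V V0 E (card M) S"
proof -
  obtain h where h: "bij_betw h {0..<card M} M"
    using ex_bij_betw_nat_finite[OF \<open>finite M\<close>] by blast
  define enc where "enc = inv_into {0..<card M} h"
  have enc: "enc m \<in> {0..<card M}" "h (enc m) = m" if "m \<in> M" for m
    using that bij_betw_inv_into[OF h] bij_betw_inv_into_right[OF h] unfolding enc_def bij_betw_def
    by auto
  define \<delta> :: "nat \<Rightarrow> ('v,'c) edge \<Rightarrow> nat" where "\<delta> k e = enc (\<sigma> (h k) (ecol e))" for k e
  have run: "fold (\<lambda>c m. \<sigma> m c) (map ecol es) m \<in> M \<and>
      delta_ext \<delta> (enc m) es = enc (fold (\<lambda>c m. \<sigma> m c) (map ecol es) m)" if "m \<in> M" for es m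
    using that
  proof (induction es arbitrary: m)
    case (Cons e es)
    then show ?case using closed enc by (simp add: delta_ext_def \<delta>_def)
  qed (simp add: delta_ext_def)
  show ?thesis
    unfolding chromatic_q_state_strategy_def
  proof (intro exI conjI)
    show "memory_structure E {0..<card M} (enc start) \<delta>"
      unfolding memory_structure_def \<delta>_def using enc closed \<open>start \<in> M\<close> bij_betw_apply[OF h]
      by auto
    show "card {0..<card M} = card M" by simp
    show "chromatic E {0..<card M} \<delta>"
      unfolding chromatic_def \<delta>_def by (rule exI[of _ "\<lambda>k c. enc (\<sigma> (h k) c)"]) simp
    show "mem_strategy V V0 E (enc start) \<delta> S"
      unfolding mem_strategy_def
    proof (intro conjI allI impI)
      fix p1 p2 :: "'v \<times> ('v,'c) edge list"
      assume "fpath V E p1 \<and> fpath V E p2 \<and> ptgt p1 = ptgt p2 \<and> ptgt p1 \<in> V0 \<and>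
        delta_ext \<delta> (enc start) (snd p1) = delta_ext \<delta> (enc start) (snd p2)"
      then show "S p1 = S p2"
        using run[OF \<open>start \<in> M\<close>] enc(2) S by metis
    qed fact
  qed
qed

locale origin_tracking =
  fixes V V0 V1 :: "'v set" and E :: "('v,'c) edge set" and R :: "('v \<times> 'v) set"
    and S1 :: "'v \<times> ('v,'c) edge list \<Rightarrow> ('v,'c) edge"
    and M1 :: "'m set" and m0 :: 'm and d1 :: "'m \<Rightarrow> ('v,'c) edge \<Rightarrow> 'm"
  assumes arena: "arena V V0 V1 E" and preorder: "total_preorder_on V R"
    and memory: "memory_structure E M1 m0 d1" and S1: "mem_strategy V V0 E m0 d1 S1"
begin

lemma finite_V: "finite V" and finite_M1: "finite M1"
  using arena memory unfolding arena_def memory_structure_def by auto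

lemma edge_ends_in_V: "e \<in> E \<Longrightarrow> esrc e \<in> V \<and> etgt e \<in> V"
  using arena unfolding arena_def by blast

lemma R_refl: "x \<in> V \<Longrightarrow> (x, x) \<in> R"
  and R_trans: "(x, y) \<in> R \<Longrightarrow> (y, z) \<in> R \<Longrightarrow> (x, z) \<in> R"
  using preorder unfolding total_preorder_on_def by blast+

text \<open>Well defined up to the choice of a path, because \<open>S1\<close> is an \<open>M1\<close>-strategy.\<close>

definition S1_move :: "'v \<Rightarrow> 'm \<Rightarrow> ('v,'c) edge" where
  "S1_move x m = S1 (SOME p. fpath V E p \<and> ptgt p = x \<and> delta_ext d1 m0 (snd p) = m)"

lemma S1_move_eq:
  assumes "fpath V E p" "ptgt p \<in> V0"
  shows "S1_move (ptgt p) (delta_ext d1 m0 (snd p)) = S1 p"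
proof -
  define p' where "p' = (SOME p'. fpath V E p' \<and> ptgt p' = ptgt p \<and>
    delta_ext d1 m0 (snd p') = delta_ext d1 m0 (snd p))"
  have "fpath V E p' \<and> ptgt p' = ptgt p \<and> delta_ext d1 m0 (snd p') = delta_ext d1 m0 (snd p)"
    unfolding p'_def by (rule someI[where x = p]) (simp add: assms(1))
  then have "S1 p' = S1 p"
    using assms by (intro S1[unfolded mem_strategy_def, THEN conjunct2, rule_format]) simp
  then show ?thesis unfolding S1_move_def p'_def .
qed

definition successors :: "('v \<Rightarrow> ('v \<times> 'm) option) \<Rightarrow> 'c \<Rightarrow> 'v \<Rightarrow> ('v \<times> 'm) set" where
  "successors f c y = {(u, d1 m e) | u m e. e \<in> E \<and> ecol e = c \<and> etgt e = y \<and>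
     f (esrc e) = Some (u, m) \<and> (u, m) \<in> V \<times> M1 \<and> (esrc e \<in> V0 \<longrightarrow> e = S1_move (esrc e) m)}"

lemma successors_subset: "successors f c y \<subseteq> V \<times> M1"
  using memory unfolding successors_def memory_structure_def by auto

definition best :: "('v \<times> 'm) set \<Rightarrow> 'v \<times> 'm" where
  "best A = (SOME a. a \<in> A \<and> (\<forall>b\<in>A. (fst b, fst a) \<in> R))"

lemma best_is_max:
  assumes "A \<subseteq> V \<times> M1" "A \<noteq> {}"
  shows "best A \<in> A \<and> (\<forall>b\<in>A. (fst b, fst (best A)) \<in> R)"
proof -
  have "fst ` A \<subseteq> V" using assms(1) by auto
  moreover have "finite (fst ` A)" using finite_subset[OF calculation finite_V] .
  ultimately obtain x where "x \<in> fst ` A" and max: "\<forall>y\<in>fst ` A. (y, x) \<in> R"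
    using total_preorder_on_finite_has_max[OF preorder] assms(2) by blast
  then obtain a where "a \<in> A" "fst a = x" by blast
  with max have "\<exists>a. a \<in> A \<and> (\<forall>b\<in>A. (fst b, fst a) \<in> R)" by blast
  then show ?thesis unfolding best_def by (rule someI_ex)
qed

definition update :: "('v \<Rightarrow> ('v \<times> 'm) option) \<Rightarrow> 'c \<Rightarrow> 'v \<Rightarrow> ('v \<times> 'm) option" where
  "update f c = (\<lambda>y. if y \<in> V then
     (if successors f c y = {} then None else Some (best (successors f c y))) else undefined)"

definition init :: "'v \<Rightarrow> ('v \<times> 'm) option" where
  "init = (\<lambda>x. if x \<in> V then Some (x, m0) else undefined)"

definition after :: "'c list \<Rightarrow> 'v \<Rightarrow> ('v \<times> 'm) option" where
  "after cs = fold (\<lambda>c f. update f c) cs init"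

lemma after_Nil [simp]: "after [] = init"
  by (simp add: after_def)

lemma after_snoc [simp]: "after (cs @ [c]) = update (after cs) c"
  by (simp add: after_def)

definition states :: "('v \<Rightarrow> ('v \<times> 'm) option) set" where
  "states = V \<rightarrow>\<^sub>E insert None (Some ` (V \<times> M1))"

lemma update_in_states: "update f c \<in> states"
proof -
  have "best (successors f c y) \<in> V \<times> M1" if "successors f c y \<noteq> {}" for y
    using best_is_max[OF successors_subset that] successors_subset by blast
  then show ?thesis unfolding states_def update_def by (auto split: if_split_asm)
qed

lemma init_in_states: "init \<in> states"
  using memory unfolding states_def init_def memory_structure_def by auto

lemma after_in_states: "after cs \<in> states"
  using init_in_states update_in_states by (cases cs rule: rev_exhaust) auto

lemma after_Some_in:
  assumes "y \<in> V" "after cs y = Some (u, m)"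
  shows "u \<in> V \<and> m \<in> M1"
proof -
  have "after cs y \<in> insert None (Some ` (V \<times> M1))"
    using after_in_states[of cs] assms(1) unfolding states_def by (rule PiE_mem)
  then show ?thesis using assms(2) by auto
qed

lemma finite_states: "finite states"
  unfolding states_def using finite_V finite_M1 by (simp add: finite_PiE)

lemma card_states: "card states = (card M1 * card V + 1) ^ card V"
proof -
  have "card (insert None (Some ` (V \<times> M1))) = card M1 * card V + 1"
    using finite_V finite_M1 by (simp add: card_image card_cartesian_product)
  then show ?thesis unfolding states_def by (simp add: card_PiE[OF finite_V])
qed

lemma after_SomeD:
  assumes "y \<in> V" "after cs y = Some (u, m)"
  shows "\<exists>es. fplay V V0 E S1 u es \<and> ptgt (u, es) = y \<and> delta_ext d1 m0 es = m \<and> map ecol es = cs"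
  using assms
proof (induction cs arbitrary: y u m rule: rev_induct)
  case Nil
  then have "u = y" "m = m0" by (auto simp: init_def)
  then show ?case
    using Nil.prems(1) by (intro exI[of _ "[]"]) (simp add: fplay_def fpath_def ptgt_def delta_ext_def)
next
  case (snoc c cs)
  then have "successors (after cs) c y \<noteq> {}" and "best (successors (after cs) c y) = (u, m)"
    by (auto simp: update_def split: if_split_asm)
  then have "(u, m) \<in> successors (after cs) c y" using best_is_max[OF successors_subset] by metis
  then obtain m' e where e: "e \<in> E" "ecol e = c" "etgt e = y" "after cs (esrc e) = Some (u, m')"
      "esrc e \<in> V0 \<longrightarrow> e = S1_move (esrc e) m'" "m = d1 m' e"
    unfolding successors_def by blast
  obtain es where es: "fplay V V0 E S1 u es" "ptgt (u, es) = esrc e" "delta_ext d1 m0 es = m'"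
      "map ecol es = cs"
    using snoc.IH edge_ends_in_V[OF e(1)] e(4) by blast
  have "fplay V V0 E S1 u (es @ [e])"
  proof (rule fplay_snoc[OF es(1) e(1)])
    show "esrc e = ptgt (u, es)" using es(2) by simp
    show "e = S1 (u, es)" if "ptgt (u, es) \<in> V0"
      using e(5) S1_move_eq[of "(u, es)"] es that unfolding fplay_def by auto
  qed
  then show ?case using e es by (intro exI[of _ "es @ [e]"]) (simp add: delta_ext_def)
qed

lemma S1_move_valid:
  assumes "y \<in> V0" "after cs y = Some (u, m)"
  shows "S1_move y m \<in> E \<and> esrc (S1_move y m) = y"
proof -
  have "y \<in> V" using arena assms(1) unfolding arena_def by blast
  then obtain es where es: "fpath V E (u, es)" "ptgt (u, es) = y" "delta_ext d1 m0 es = m"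
    using after_SomeD assms(2) unfolding fplay_def by blast
  then have "S1_move y m = S1 (u, es)" using S1_move_eq[of "(u, es)"] assms(1) by simp
  moreover have "S1 (u, es) \<in> E \<and> esrc (S1 (u, es)) = y"
    using S1 es assms(1) unfolding mem_strategy_def strategy_def by auto
  ultimately show ?thesis by simp
qed

text \<open>The \<open>None\<close> case never occurs along \<open>S2\<close>-plays from \<open>V\<close>; any legal edge will do there.\<close>

definition move :: "('v \<Rightarrow> ('v \<times> 'm) option) \<Rightarrow> 'v \<Rightarrow> ('v,'c) edge" where
  "move f x = (case f x of None \<Rightarrow> SOME e. e \<in> E \<and> esrc e = x | Some (u, m) \<Rightarrow> S1_move x m)"

definition S2 :: "'v \<times> ('v,'c) edge list \<Rightarrow> ('v,'c) edge" where
  "S2 p = move (after (map ecol (snd p))) (ptgt p)"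

lemma strategy_S2: "strategy V V0 E S2"
  unfolding strategy_def
proof (intro allI impI)
  fix p :: "'v \<times> ('v,'c) edge list"
  let ?f = "after (map ecol (snd p))" and ?x = "ptgt p"
  assume p: "fpath V E p \<and> ?x \<in> V0"
  show "S2 p \<in> E \<and> esrc (S2 p) = ?x"
  proof (cases "?f ?x")
    case None
    have out: "\<exists>e. e \<in> E \<and> esrc e = ?x"
      using arena ptgt_in_V[OF arena] p unfolding arena_def by blast
    show ?thesis using someI_ex[OF out] None unfolding S2_def move_def by simp
  next
    case (Some um)
    then show ?thesis using S1_move_valid p unfolding S2_def move_def by (cases um) auto
  qed
qed

lemma chromatic_S2: "chromatic_q_state_strategy V V0 E (card states) S2"
  by (rule chromatic_q_state_strategyI[where \<sigma> = update and move = move and start = init])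
    (auto simp: finite_states init_in_states update_in_states strategy_S2 S2_def after_def)

lemma S2_play_origin:
  assumes "v \<in> V" "ipath E v w" "consistent V0 S2 v w"
  shows "\<exists>u m. after (map (ecol \<circ> w) [0..<k]) (esrc (w k)) = Some (u, m) \<and> (v, u) \<in> R"
proof (induction k)
  case 0
  have "esrc (w 0) = v" using assms(2) unfolding ipath_def by simp
  then show ?case using assms(1) R_refl by (simp add: init_def)
next
  case (Suc k)
  let ?f = "after (map (ecol \<circ> w) [0..<k])" and ?x = "esrc (w k)"
  obtain u m where um: "?f ?x = Some (u, m)" "(v, u) \<in> R" using Suc.IH by blast
  have wk: "w k \<in> E" "etgt (w k) = esrc (w (Suc k))" using assms(2) unfolding ipath_def by auto
  have "(u, m) \<in> V \<times> M1" using after_Some_in[OF _ um(1)] edge_ends_in_V[OF wk(1)] by simp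
  moreover have "w k = S1_move ?x m" if "?x \<in> V0"
  proof -
    have "w k = S2 (v, map w [0..<k])" using consistent_move[OF assms(2,3) that] .
    then show ?thesis using um(1) ptgt_ipath_prefix[OF assms(2)] by (simp add: S2_def move_def)
  qed
  ultimately have cand: "(u, d1 m (w k)) \<in> successors ?f (ecol (w k)) (etgt (w k))"
    unfolding successors_def using wk(1) um(1) by blast
  define b where "b = best (successors ?f (ecol (w k)) (etgt (w k)))"
  have "after (map (ecol \<circ> w) [0..<Suc k]) (esrc (w (Suc k))) = Some b"
    using cand wk edge_ends_in_V[OF wk(1)] unfolding b_def by (auto simp: update_def)
  moreover have "(u, fst b) \<in> R" using best_is_max[OF successors_subset] cand unfolding b_def by fastforce
  then have "(v, fst b) \<in> R" using um(2) R_trans by blast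
  ultimately show ?case by (metis prod.collapse)
qed

lemma cols_S2_subset:
  assumes "v \<in> V"
  shows "cols V0 E S2 v \<subseteq> (\<Union>u\<in>{u\<in>V. (v, u) \<in> R}. cols V0 E S1 u)"
proof
  fix c assume "c \<in> cols V0 E S2 v"
  then obtain w where c: "c = (\<lambda>i. ecol (w i))" and w: "ipath E v w" "consistent V0 S2 v w"
    unfolding cols_def by blast
  show "c \<in> (\<Union>u\<in>{u\<in>V. (v, u) \<in> R}. cols V0 E S1 u)"
  proof (rule cols_compactness)
    show "finite E" using arena unfolding arena_def by simp
  next
    fix k
    obtain u m where um: "after (map (ecol \<circ> w) [0..<k]) (esrc (w k)) = Some (u, m)" "(v, u) \<in> R"
      using S2_play_origin[OF assms w] by blast
    have "esrc (w k) \<in> V" using w(1) edge_ends_in_V unfolding ipath_def by blast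
    then obtain es where "fplay V V0 E S1 u es" "map ecol es = map (ecol \<circ> w) [0..<k]"
      using after_SomeD um(1) by blast
    moreover have "u \<in> V" using after_Some_in[OF \<open>esrc (w k) \<in> V\<close> um(1)] by simp
    ultimately show "\<exists>u\<in>{u\<in>V. (v, u) \<in> R}. \<exists>es. fplay V V0 E S1 u es \<and> map ecol es = map c [0..<k]"
      using um(2) c by (auto simp: comp_def)
  qed
qed

end

theorem theorem2:
  fixes V V0 V1 :: "'v set" and E :: "('v,'c) edge set" and n q :: nat
    and R :: "('v \<times> 'v) set" and S1 :: "'v \<times> ('v,'c) edge list \<Rightarrow> ('v,'c) edge"
  assumes "0 < n" and "0 < q"
    and "arena V V0 V1 E" and "card V = n"
    and "total_preorder_on V R"
    and "q_state_strategy V V0 E q S1"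
  shows "\<exists>S2. chromatic_q_state_strategy V V0 E ((q * n + 1) ^ n) S2 \<and>
           (\<forall>v\<in>V. cols V0 E S2 v \<subseteq> (\<Union>u\<in>{u\<in>V. (v,u) \<in> R}. cols V0 E S1 u))"
proof -
  obtain M1 :: "nat set" and m0 d1 where memory: "memory_structure E M1 m0 d1" and "card M1 = q"
    and S1: "mem_strategy V V0 E m0 d1 S1"
    using assms(6) unfolding q_state_strategy_def by blast
  interpret origin_tracking V V0 V1 E R S1 M1 m0 d1
    using assms(3,5) memory S1 by unfold_locales
  have "card states = (q * n + 1) ^ n"
    using card_states \<open>card M1 = q\<close> assms(4) by simp
  then show ?thesis using chromatic_S2 cols_S2_subset by auto
qed

end
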